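(* In the setting below, assume $\|\nabla f_i(x)\|\le G_i$ for all $x$ and $i$. Then for any $k\in[K]$, any permutation $\sigma_k$ and any $z\in\mathbb R^d$, $$\frac1n\sum_{i=1}^n\Big(B_{f_{\sigma_k^i}}(x_{k+1},x_k^i)-B_{f_{\sigma_k^i}}(z,x_k^i)\Big)\le2\bar G\|x_{k+1}-x_k\|+\bar G^2n\eta_k.$$
   Context: Setting. Let $n,d\in\mathbb N$, let $f_1,\dots,f_n:\mathbb R^d\to\mathbb R$ be convex, let $\psi:\mathbb R^d\to\mathbb R\cup\{+\infty\}$ be proper, closed and convex. For a convex function $g$, $\nabla g(x)$ denotes an element of $\partial g(x)$ (for each $f_i$ a fixed selection of subgradients, the same one used in the algorithm and in the Bregman divergences), and $B_g(x,y)=g(x)-g(y)-\langle\nabla g(y),x-y\rangle$. Proximal shuffling gradient method: given $x_1\in\mathrm{dom}\,\psi$, a number of epochs $K\ge2$ and stepsizes $\eta_k>0$, for $k=1,\dots,K$: choose a permutation $\sigma_k=(\sigma_k^1,\dots,\sigma_k^n)$ of $[n]=\{1,\dots,n\}$; set $x_k^1=x_k$ and $x_k^{i+1}=x_k^i-\eta_k\nabla f_{\sigma_k^i}(x_k^i)$ for $i=1,\dots,n$; set $x_{k+1}=\arg\min_{x\in\mathbb R^d}\{n\psi(x)+\frac{1}{2\eta_k}\|x-x_k^{n+1}\|^2\}$. Lipschitz condition: constants $G_i>0$ with $\|\nabla f_i(x)\|\le G_i$ for all $x\in\mathbb R^d$, $i\in[n]$ (for every subgradient); $\bar G=\frac1n\sum_{i=1}^nG_i$.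 *)

theory Defs
  imports "HOL-Analysis.Analysis"
begin

definition subdiff :: "('a::real_inner \<Rightarrow> real) \<Rightarrow> 'a \<Rightarrow> 'a set" where
  "subdiff f x = {g. \<forall>y. f y \<ge> f x + inner g (y - x)}"

(* Bregman divergence B_f(x,y) w.r.t. a fixed subgradient selection gf of f *)
definition bregman :: "('a::real_inner \<Rightarrow> real) \<Rightarrow> ('a \<Rightarrow> 'a) \<Rightarrow> 'a \<Rightarrow> 'a \<Rightarrow> real" where
  "bregman f gf x y = f x - f y - inner (gf y) (x - y)"

definition proper_fun :: "('a \<Rightarrow> ereal) \<Rightarrow> bool" where
  "proper_fun psi \<longleftrightarrow> (\<forall>x. psi x \<noteq> -\<infinity>) \<and> (\<exists>x. psi x \<noteq> \<infinity>)"

definition closed_fun :: "('a::topological_space \<Rightarrow> ereal) \<Rightarrow> bool" where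
  "closed_fun psi \<longleftrightarrow> closed {(x, r::real). psi x \<le> ereal r}"

definition convex_fun :: "('a::real_vector \<Rightarrow> ereal) \<Rightarrow> bool" where
  "convex_fun psi \<longleftrightarrow> (\<forall>x y t. 0 \<le> t \<and> t \<le> 1 \<longrightarrow>
      psi ((1 - t) *\<^sub>R x + t *\<^sub>R y) \<le> ereal (1 - t) * psi x + ereal t * psi y)"

end

theory Submission
  imports Defs
begin

text \<open>Along the epoch the inner iterate x_k^i drifts from x_k by at most eta_k times the sum of
  the first i-1 Lipschitz constants.  Each Bregman difference
  B(x_{k+1}, x_k^i) - B(z, x_k^i) is at most 2 G_i times the distance from x_{k+1} to x_k^i, since
  the subtracted divergence is nonnegative and the other one is a difference of two bounded
  subgradients paired with x_{k+1} - x_k^i.  Summing, the drift terms give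
  2 eta_k \<Sum>_i G_i \<Sum>_{l<i} G_l \<le> eta_k (\<Sum>_i G_i)^2.  The bound holds for any point in
  place of x_{k+1}.\<close>

lemma bregman_nonneg:
  assumes "gf y \<in> subdiff f y"
  shows "0 \<le> bregman f gf z y"
  using assms unfolding subdiff_def bregman_def by (smt (verit) mem_Collect_eq)

lemma bregman_le_subgrad_bound:
  fixes f :: "'a::real_inner \<Rightarrow> real"
  assumes subgrad: "gf x \<in> subdiff f x"
    and bound_x: "norm (gf x) \<le> G" and bound_y: "norm (gf y) \<le> G"
  shows "bregman f gf x y \<le> 2 * G * norm (x - y)"
proof -
  have "f y \<ge> f x + inner (gf x) (y - x)"
    using subgrad unfolding subdiff_def by auto
  then have "bregman f gf x y \<le> inner (gf x - gf y) (x - y)"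
    unfolding bregman_def by (simp add: inner_diff_left inner_diff_right)
  also have "\<dots> \<le> norm (gf x - gf y) * norm (x - y)"
    by (rule norm_cauchy_schwarz)
  also have "\<dots> \<le> 2 * G * norm (x - y)"
    using norm_triangle_ineq4[of "gf x" "gf y"] bound_x bound_y
    by (intro mult_right_mono) auto
  finally show ?thesis .
qed

lemma bregman_diff_le:
  fixes f :: "'a::real_inner \<Rightarrow> real"
  assumes subgrad: "\<And>y. gf y \<in> subdiff f y" and bound: "\<And>y. norm (gf y) \<le> G"
  shows "bregman f gf x y - bregman f gf z y \<le> 2 * G * norm (x - y)"
  using bregman_le_subgrad_bound[of gf x f G y] bregman_nonneg[of gf y f z] subgrad bound
  by fastforce

lemma two_sum_mult_prefix_sums_le_square:
  fixes a :: "nat \<Rightarrow> real"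
  shows "2 * (\<Sum>i=1..m. a i * (\<Sum>l=1..<i. a l)) \<le> (\<Sum>i=1..m. a i)\<^sup>2"
proof (induction m)
  case 0
  then show ?case by simp
next
  case (Suc m)
  have prefix: "(\<Sum>l=1..<Suc m. a l) = (\<Sum>i=1..m. a i)"
    by (simp add: atLeastLessThanSuc_atLeastAtMost)
  have "(\<Sum>i=1..Suc m. a i * (\<Sum>l=1..<i. a l))
      = (\<Sum>i=1..m. a i * (\<Sum>l=1..<i. a l)) + a (Suc m) * (\<Sum>l=1..<Suc m. a l)"
    by simp
  then have "2 * (\<Sum>i=1..Suc m. a i * (\<Sum>l=1..<i. a l))
      = 2 * (\<Sum>i=1..m. a i * (\<Sum>l=1..<i. a l)) + 2 * a (Suc m) * (\<Sum>i=1..m. a i)"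
    by (simp only: prefix) (simp add: algebra_simps)
  also have "\<dots> \<le> (\<Sum>i=1..m. a i)\<^sup>2 + 2 * a (Suc m) * (\<Sum>i=1..m. a i) + (a (Suc m))\<^sup>2"
    using Suc zero_le_power2[of "a (Suc m)"] by linarith
  also have "\<dots> = (\<Sum>i=1..Suc m. a i)\<^sup>2"
    by (simp add: power2_eq_square algebra_simps)
  finally show ?case .
qed

lemma norm_iterate_drift_le:
  fixes y v :: "nat \<Rightarrow> 'a::real_normed_vector"
  assumes update: "\<And>i. i \<in> {1..m} \<Longrightarrow> y (i + 1) = y i - e *\<^sub>R v i"
    and bound: "\<And>i. i \<in> {1..m} \<Longrightarrow> norm (v i) \<le> a i"
    and e_nonneg: "0 \<le> e" and i: "1 \<le> i" "i \<le> m + 1"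
  shows "norm (y i - y 1) \<le> e * (\<Sum>l=1..<i. a l)"
  using i
proof (induction i rule: dec_induct)
  case base
  then show ?case by simp
next
  case (step j)
  then have j: "j \<in> {1..m}" by auto
  have "norm (y (Suc j) - y 1) = norm ((y j - y 1) - e *\<^sub>R v j)"
    unfolding Suc_eq_plus1 update[OF j] by (simp add: algebra_simps)
  also have "\<dots> \<le> norm (y j - y 1) + e * norm (v j)"
    using norm_triangle_ineq4[of "y j - y 1" "e *\<^sub>R v j"] e_nonneg by simp
  also have "\<dots> \<le> e * (\<Sum>l=1..<j. a l) + e * a j"
    using step.IH j bound[OF j] e_nonneg by (intro add_mono mult_left_mono) auto
  also have "\<dots> = e * (\<Sum>l=1..<Suc j. a l)"
    using step.hyps by (simp add: algebra_simps)
  finally show ?case .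
qed

lemma epoch_bregman_sum_le:
  fixes f :: "nat \<Rightarrow> 'a::real_inner \<Rightarrow> real"
  assumes subgrad: "\<And>i y. i \<in> {1..m} \<Longrightarrow> gf i y \<in> subdiff (f i) y"
    and bound: "\<And>i y. i \<in> {1..m} \<Longrightarrow> norm (gf i y) \<le> a i"
    and step: "\<And>i. i \<in> {1..m} \<Longrightarrow> y (i + 1) = y i - e *\<^sub>R gf i (y i)"
    and e_nonneg: "0 \<le> e"
  shows "(\<Sum>i=1..m. bregman (f i) (gf i) x (y i) - bregman (f i) (gf i) z (y i))
    \<le> 2 * (\<Sum>i=1..m. a i) * norm (x - y 1) + e * (\<Sum>i=1..m. a i)\<^sup>2"
proof -
  let ?d = "norm (x - y 1)"
  have term_le: "bregman (f i) (gf i) x (y i) - bregman (f i) (gf i) z (y i)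
      \<le> 2 * a i * (?d + e * (\<Sum>l=1..<i. a l))" if i: "i \<in> {1..m}" for i
  proof -
    have "norm (x - y i) \<le> ?d + norm (y i - y 1)"
      using norm_triangle_ineq[of "x - y 1" "y 1 - y i"] by (simp add: norm_minus_commute)
    also have "\<dots> \<le> ?d + e * (\<Sum>l=1..<i. a l)"
      using norm_iterate_drift_le[of m y e "\<lambda>i. gf i (y i)" a i] step bound e_nonneg i by auto
    moreover have "0 \<le> a i"
      by (rule order_trans[OF norm_ge_zero bound[OF i]])
    ultimately have "2 * a i * norm (x - y i) \<le> 2 * a i * (?d + e * (\<Sum>l=1..<i. a l))"
      by (simp add: mult_left_mono)
    with bregman_diff_le[OF subgrad[OF i] bound[OF i]] show ?thesis
      by (rule order_trans)
  qed
  have "(\<Sum>i=1..m. bregman (f i) (gf i) x (y i) - bregman (f i) (gf i) z (y i))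
      \<le> (\<Sum>i=1..m. 2 * a i * (?d + e * (\<Sum>l=1..<i. a l)))"
    by (rule sum_mono) (rule term_le)
  also have "\<dots> = (\<Sum>i=1..m. 2 * ?d * a i + e * (2 * (a i * (\<Sum>l=1..<i. a l))))"
    by (rule sum.cong) (simp_all add: algebra_simps)
  also have "\<dots> = 2 * ?d * (\<Sum>i=1..m. a i) + e * (2 * (\<Sum>i=1..m. a i * (\<Sum>l=1..<i. a l)))"
    by (simp only: sum.distrib sum_distrib_left)
  also have "\<dots> \<le> 2 * ?d * (\<Sum>i=1..m. a i) + e * (\<Sum>i=1..m. a i)\<^sup>2"
    using two_sum_mult_prefix_sums_le_square[of a m] e_nonneg by (simp add: mult_left_mono)
  also have "\<dots> = 2 * (\<Sum>i=1..m. a i) * ?d + e * (\<Sum>i=1..m. a i)\<^sup>2"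
    by simp
  finally show ?thesis .
qed

theorem mainTheorem8:
  fixes n K :: nat
    and f :: "nat \<Rightarrow> 'a::euclidean_space \<Rightarrow> real"
    and gf :: "nat \<Rightarrow> 'a \<Rightarrow> 'a"
    and psi :: "'a \<Rightarrow> ereal"
    and G :: "nat \<Rightarrow> real"
    and eta :: "nat \<Rightarrow> real"
    and \<sigma> :: "nat \<Rightarrow> nat \<Rightarrow> nat"
    and x :: "nat \<Rightarrow> 'a"
    and xi :: "nat \<Rightarrow> nat \<Rightarrow> 'a"
    and k :: nat and z :: 'a
  assumes n_pos: "0 < n"
    and K_ge: "K \<ge> 2"
    and f_convex: "\<And>i. i \<in> {1..n} \<Longrightarrow> convex_on UNIV (f i)"
    and gf_subgrad: "\<And>i y. i \<in> {1..n} \<Longrightarrow> gf i y \<in> subdiff (f i) y"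
    and psi_proper: "proper_fun psi"
    and psi_closed: "closed_fun psi"
    and psi_convex: "convex_fun psi"
    and G_pos: "\<And>i. i \<in> {1..n} \<Longrightarrow> G i > 0"
    and lipschitz: "\<And>i y g. i \<in> {1..n} \<Longrightarrow> g \<in> subdiff (f i) y \<Longrightarrow> norm g \<le> G i"
    and x1_dom: "psi (x 1) \<noteq> \<infinity>"
    and eta_pos: "\<And>k. k \<in> {1..K} \<Longrightarrow> eta k > 0"
    and perm: "\<And>k. k \<in> {1..K} \<Longrightarrow> \<sigma> k permutes {1..n}"
    and inner_start: "\<And>k. k \<in> {1..K} \<Longrightarrow> xi k 1 = x k"
    and inner_step: "\<And>k i. k \<in> {1..K} \<Longrightarrow> i \<in> {1..n} \<Longrightarrow>
        xi k (i + 1) = xi k i - eta k *\<^sub>R gf (\<sigma> k i) (xi k i)"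
    and prox_step: "\<And>k y. k \<in> {1..K} \<Longrightarrow>
        ereal (real n) * psi (x (k + 1)) + ereal (1 / (2 * eta k) * (norm (x (k + 1) - xi k (n + 1)))\<^sup>2)
        \<le> ereal (real n) * psi y + ereal (1 / (2 * eta k) * (norm (y - xi k (n + 1)))\<^sup>2)"
    and k_range: "k \<in> {1..K}"
  shows "(1 / real n) * (\<Sum>i=1..n. bregman (f (\<sigma> k i)) (gf (\<sigma> k i)) (x (k + 1)) (xi k i)
                                   - bregman (f (\<sigma> k i)) (gf (\<sigma> k i)) z (xi k i))
         \<le> 2 * ((\<Sum>i=1..n. G i) / real n) * norm (x (k + 1) - x k)
           + ((\<Sum>i=1..n. G i) / real n)\<^sup>2 * real n * eta k"
proof -
  let ?S = "\<Sum>i=1..n. G i"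
  have \<sigma>: "\<sigma> k permutes {1..n}"
    using perm k_range by blast
  have \<sigma>_in: "\<sigma> k i \<in> {1..n}" if "i \<in> {1..n}" for i
    using permutes_in_image[OF \<sigma>] that by blast
  have sum_permuted: "(\<Sum>i=1..n. G (\<sigma> k i)) = ?S"
    using sum.permute[OF \<sigma>, of G] by (simp add: o_def)
  have "(\<Sum>i=1..n. bregman (f (\<sigma> k i)) (gf (\<sigma> k i)) (x (k + 1)) (xi k i)
                   - bregman (f (\<sigma> k i)) (gf (\<sigma> k i)) z (xi k i))
      \<le> 2 * ?S * norm (x (k + 1) - x k) + eta k * ?S\<^sup>2"
    using epoch_bregman_sum_le[of n "\<lambda>i. gf (\<sigma> k i)" "\<lambda>i. f (\<sigma> k i)" "\<lambda>i. G (\<sigma> k i)" "xi k"]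
      gf_subgrad[OF \<sigma>_in] lipschitz[OF \<sigma>_in gf_subgrad[OF \<sigma>_in]] inner_step[OF k_range]
      eta_pos[OF k_range] inner_start[OF k_range] sum_permuted
    by (simp add: less_imp_le)
  then have "(1 / real n) * (\<Sum>i=1..n. bregman (f (\<sigma> k i)) (gf (\<sigma> k i)) (x (k + 1)) (xi k i)
                   - bregman (f (\<sigma> k i)) (gf (\<sigma> k i)) z (xi k i))
      \<le> (1 / real n) * (2 * ?S * norm (x (k + 1) - x k) + eta k * ?S\<^sup>2)"
    by (rule mult_left_mono) simp
  also have "\<dots> = 2 * (?S / real n) * norm (x (k + 1) - x k) + (?S / real n)\<^sup>2 * real n * eta k"
    using n_pos by (simp add: power2_eq_square divide_simps)
  finally show ?thesis .
qed

end
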